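(* Let $X$ be a $C^*$-correspondence over $A$ with left action $\phi$, let $Y=X\oplus T$ over $B=A\oplus T$ be formed by adding the tail $T=(\ker\phi)^{(\mathbb N)}$, let $(\tilde\pi,\tilde t)$ be a representation of $Y$ that is coisometric on $J(Y)$, and let $C_X$ be the $C^*$-algebra generated by $\{\tilde\pi(a,\vec 0),\tilde t(\xi,\vec 0):a\in A,\xi\in X\}$. Then for every $n\ge0$, $\xi_i,\eta_i\in X$, $\vec f_i,\vec g_i,\vec h\in T$ and $a\in A$, the element $$\tilde t(\xi_1,\vec f_1)\cdots\tilde t(\xi_n,\vec f_n)\,\tilde\pi(a,\vec h)\,\tilde t(\eta_n,\vec g_n)^*\cdots\tilde t(\eta_1,\vec g_1)^*$$ equals $c+\tilde\pi(0,\vec k)$ for some $c\in C_X$ and some $\vec k\in T$.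
   Context: A $C^*$-correspondence over $A$ is a right Hilbert $A$-module $X$ with inner product $\langle\cdot,\cdot\rangle_A$ and a $*$-homomorphism $\phi:A\to\mathcal L(X)$; $\Theta_{\xi,\eta}(\zeta)=\xi\langle\eta,\zeta\rangle_A$, $\mathcal K(X)=\overline{\mathrm{span}}\{\Theta_{\xi,\eta}\}$, $J(Y):=\phi_B^{-1}(\mathcal K(Y))$. A representation of $Y$ over $B$ in a $C^*$-algebra $C$ is a pair $(\tilde\pi,\tilde t)$, $\tilde\pi:B\to C$ a $*$-homomorphism, $\tilde t:Y\to C$ linear, with $\tilde t(y)^*\tilde t(y')=\tilde\pi(\langle y,y'\rangle_B)$, $\tilde t(\phi_B(b)y)=\tilde\pi(b)\tilde t(y)$, $\tilde t(yb)=\tilde t(y)\tilde\pi(b)$; $\tilde\pi^{(1)}(\Theta_{y,y'})=\tilde t(y)\tilde t(y')^*$ defines $\tilde\pi^{(1)}$ on $\mathcal K(Y)$; coisometric on $J(Y)$ means $\tilde\pi^{(1)}(\phi_B(b))=\tilde\pi(b)$ for all $b\in J(Y)$. Adding the tail: $T:=(\ker\phi)^{(\mathbb N)}$ is the $c_0$-direct sum of copies of $\ker\phi$ (coordinatewise operations), a Hilbert module over itself with $\langle\vec f,\vec g\rangle=\vec f^*\vec g$; $B:=A\oplus T$, $Y:=X\oplus T$ with $(\xi,\vec f)(a,\vec g)=(\xi a,\vec f\vec g)$, $\langle(\xi,\vec f),(\nu,\vec g)\rangle_B=(\langle\xi,\nu\rangle_A,\vec f^*\vec g)$, $\phi_B(a,\vec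 f)(\xi,\vec g)=(\phi(a)\xi,(ag_1,f_1g_2,f_2g_3,\dots))$. *)

theory Defs
  imports "HOL-Analysis.Analysis"
begin

text \<open>A C*-algebra is modelled as a real Banach algebra type together with a complex
scalar multiplication sc (extending the real one) and an involution st, satisfying the
usual axioms including the C*-identity.\<close>

definition cstar_algebra ::
  "(complex \<Rightarrow> 'a::{real_normed_algebra,banach} \<Rightarrow> 'a) \<Rightarrow> ('a \<Rightarrow> 'a) \<Rightarrow> bool" where
  "cstar_algebra sc st \<longleftrightarrow>
     (\<forall>x. sc 1 x = x) \<and>
     (\<forall>c d x. sc (c * d) x = sc c (sc d x)) \<and>
     (\<forall>c d x. sc (c + d) x = sc c x + sc d x) \<and>
     (\<forall>c x y. sc c (x + y) = sc c x + sc c y) \<and>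
     (\<forall>r x. sc (complex_of_real r) x = scaleR r x) \<and>
     (\<forall>c x y. sc c (x * y) = sc c x * y \<and> sc c (x * y) = x * sc c y) \<and>
     (\<forall>c x. norm (sc c x) = cmod c * norm x) \<and>
     (\<forall>x y. st (x + y) = st x + st y) \<and>
     (\<forall>c x. st (sc c x) = sc (cnj c) (st x)) \<and>
     (\<forall>x y. st (x * y) = st y * st x) \<and>
     (\<forall>x. st (st x) = x) \<and>
     (\<forall>x. norm (st x * x) = (norm x)\<^sup>2)"

definition cpositive :: "('a::{real_normed_algebra} \<Rightarrow> 'a) \<Rightarrow> 'a \<Rightarrow> bool" where
  "cpositive st a \<longleftrightarrow> (\<exists>b. a = st b * b)"

definition hm_norm :: "('x \<Rightarrow> 'x \<Rightarrow> 'a::real_normed_algebra) \<Rightarrow> 'x \<Rightarrow> real" where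
  "hm_norm ip x = sqrt (norm (ip x x))"

text \<open>Right Hilbert A-module: X a complex vector space (scalar multiplication scX),
right A-action ract, A-valued inner product ip (linear in the second variable),
complete w.r.t. the norm sqrt(norm (ip x x)).\<close>

definition hilbert_module ::
  "(complex \<Rightarrow> 'a::{real_normed_algebra,banach} \<Rightarrow> 'a) \<Rightarrow> ('a \<Rightarrow> 'a) \<Rightarrow>
   (complex \<Rightarrow> 'x::ab_group_add \<Rightarrow> 'x) \<Rightarrow> ('x \<Rightarrow> 'a \<Rightarrow> 'x) \<Rightarrow> ('x \<Rightarrow> 'x \<Rightarrow> 'a) \<Rightarrow> bool" where
  "hilbert_module sc st scX ract ip \<longleftrightarrow>
     (\<forall>x. scX 1 x = x) \<and>
     (\<forall>c d x. scX (c * d) x = scX c (scX d x)) \<and>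
     (\<forall>c d x. scX (c + d) x = scX c x + scX d x) \<and>
     (\<forall>c x y. scX c (x + y) = scX c x + scX c y) \<and>
     (\<forall>x y a. ract (x + y) a = ract x a + ract y a) \<and>
     (\<forall>x a b. ract x (a + b) = ract x a + ract x b) \<and>
     (\<forall>x a b. ract (ract x a) b = ract x (a * b)) \<and>
     (\<forall>c x a. scX c (ract x a) = ract (scX c x) a \<and> ract x (sc c a) = scX c (ract x a)) \<and>
     (\<forall>x y z. ip x (y + z) = ip x y + ip x z) \<and>
     (\<forall>c x y. ip x (scX c y) = sc c (ip x y)) \<and>
     (\<forall>x y a. ip x (ract y a) = ip x y * a) \<and>
     (\<forall>x y. st (ip x y) = ip y x) \<and>
     (\<forall>x. cpositive st (ip x x)) \<and>
     (\<forall>x. ip x x = 0 \<longrightarrow> x = 0) \<and>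
     (\<forall>u :: nat \<Rightarrow> 'x.
        (\<forall>e>0. \<exists>N. \<forall>m\<ge>N. \<forall>n\<ge>N. hm_norm ip (u m - u n) < e) \<longrightarrow>
        (\<exists>x. (\<lambda>n. hm_norm ip (u n - x)) \<longlonglongrightarrow> 0))"

text \<open>C*-correspondence: Hilbert module with a *-homomorphism phi from A into the
adjointable operators on X (the adjoint of phi a is phi (st a)).\<close>

definition cstar_correspondence ::
  "(complex \<Rightarrow> 'a::{real_normed_algebra,banach} \<Rightarrow> 'a) \<Rightarrow> ('a \<Rightarrow> 'a) \<Rightarrow>
   (complex \<Rightarrow> 'x::ab_group_add \<Rightarrow> 'x) \<Rightarrow> ('x \<Rightarrow> 'a \<Rightarrow> 'x) \<Rightarrow> ('x \<Rightarrow> 'x \<Rightarrow> 'a) \<Rightarrow>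
   ('a \<Rightarrow> 'x \<Rightarrow> 'x) \<Rightarrow> bool" where
  "cstar_correspondence sc st scX ract ip phi \<longleftrightarrow>
     cstar_algebra sc st \<and> hilbert_module sc st scX ract ip \<and>
     (\<forall>a x y. phi a (x + y) = phi a x + phi a y) \<and>
     (\<forall>a c x. phi a (scX c x) = scX c (phi a x)) \<and>
     (\<forall>a x b. phi a (ract x b) = ract (phi a x) b) \<and>
     (\<forall>a x y. ip (phi a x) y = ip x (phi (st a) y)) \<and>
     (\<forall>a b x. phi (a + b) x = phi a x + phi b x) \<and>
     (\<forall>c a x. phi (sc c a) x = scX c (phi a x)) \<and>
     (\<forall>a b x. phi (a * b) x = phi a (phi b x))"

definition kerphi :: "('a \<Rightarrow> 'x::zero \<Rightarrow> 'x) \<Rightarrow> 'a set" where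
  "kerphi phi = {a. \<forall>x. phi a x = 0}"

text \<open>T = c_0-direct sum of copies of ker phi, indexed by nat (index 0 = first copy).\<close>

definition tail :: "('a::real_normed_vector \<Rightarrow> 'x::zero \<Rightarrow> 'x) \<Rightarrow> (nat \<Rightarrow> 'a) set" where
  "tail phi = {f. (\<forall>n. f n \<in> kerphi phi) \<and> f \<longlonglongrightarrow> 0}"

definition Bcar :: "('a::real_normed_vector \<Rightarrow> 'x::zero \<Rightarrow> 'x) \<Rightarrow> ('a \<times> (nat \<Rightarrow> 'a)) set" where
  "Bcar phi = UNIV \<times> tail phi"

definition addB :: "'a::plus \<times> (nat \<Rightarrow> 'a) \<Rightarrow> 'a \<times> (nat \<Rightarrow> 'a) \<Rightarrow> 'a \<times> (nat \<Rightarrow> 'a)" where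
  "addB b b' = (fst b + fst b', \<lambda>n. snd b n + snd b' n)"

definition mulB :: "'a::times \<times> (nat \<Rightarrow> 'a) \<Rightarrow> 'a \<times> (nat \<Rightarrow> 'a) \<Rightarrow> 'a \<times> (nat \<Rightarrow> 'a)" where
  "mulB b b' = (fst b * fst b', \<lambda>n. snd b n * snd b' n)"

definition scB :: "(complex \<Rightarrow> 'a \<Rightarrow> 'a) \<Rightarrow> complex \<Rightarrow> 'a \<times> (nat \<Rightarrow> 'a) \<Rightarrow> 'a \<times> (nat \<Rightarrow> 'a)" where
  "scB sc c b = (sc c (fst b), \<lambda>n. sc c (snd b n))"

definition stB :: "('a \<Rightarrow> 'a) \<Rightarrow> 'a \<times> (nat \<Rightarrow> 'a) \<Rightarrow> 'a \<times> (nat \<Rightarrow> 'a)" where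
  "stB st b = (st (fst b), \<lambda>n. st (snd b n))"

definition normB :: "'a::real_normed_vector \<times> (nat \<Rightarrow> 'a) \<Rightarrow> real" where
  "normB b = max (norm (fst b)) (SUP n. norm (snd b n))"

definition Ycar :: "('a::real_normed_vector \<Rightarrow> 'x::zero \<Rightarrow> 'x) \<Rightarrow> ('x \<times> (nat \<Rightarrow> 'a)) set" where
  "Ycar phi = UNIV \<times> tail phi"

definition addY :: "'x::plus \<times> (nat \<Rightarrow> 'a::plus) \<Rightarrow> 'x \<times> (nat \<Rightarrow> 'a) \<Rightarrow> 'x \<times> (nat \<Rightarrow> 'a)" where
  "addY y y' = (fst y + fst y', \<lambda>n. snd y n + snd y' n)"

definition subY :: "'x::minus \<times> (nat \<Rightarrow> 'a::minus) \<Rightarrow> 'x \<times> (nat \<Rightarrow> 'a) \<Rightarrow> 'x \<times> (nat \<Rightarrow> 'a)" where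
  "subY y y' = (fst y - fst y', \<lambda>n. snd y n - snd y' n)"

definition sumY :: "nat \<Rightarrow> (nat \<Rightarrow> 'x::comm_monoid_add \<times> (nat \<Rightarrow> 'a::comm_monoid_add)) \<Rightarrow> 'x \<times> (nat \<Rightarrow> 'a)" where
  "sumY n u = ((\<Sum>i<n. fst (u i)), \<lambda>k. \<Sum>i<n. snd (u i) k)"

definition scY :: "(complex \<Rightarrow> 'a \<Rightarrow> 'a) \<Rightarrow> (complex \<Rightarrow> 'x \<Rightarrow> 'x) \<Rightarrow> complex \<Rightarrow> 'x \<times> (nat \<Rightarrow> 'a) \<Rightarrow> 'x \<times> (nat \<Rightarrow> 'a)" where
  "scY sc scX c y = (scX c (fst y), \<lambda>n. sc c (snd y n))"

definition ractY :: "('x \<Rightarrow> 'a::times \<Rightarrow> 'x) \<Rightarrow> 'x \<times> (nat \<Rightarrow> 'a) \<Rightarrow> 'a \<times> (nat \<Rightarrow> 'a) \<Rightarrow> 'x \<times> (nat \<Rightarrow> 'a)" where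
  "ractY ract y b = (ract (fst y) (fst b), \<lambda>n. snd y n * snd b n)"

definition ipY :: "('a::times \<Rightarrow> 'a) \<Rightarrow> ('x \<Rightarrow> 'x \<Rightarrow> 'a) \<Rightarrow> 'x \<times> (nat \<Rightarrow> 'a) \<Rightarrow> 'x \<times> (nat \<Rightarrow> 'a) \<Rightarrow> 'a \<times> (nat \<Rightarrow> 'a)" where
  "ipY st ip y y' = (ip (fst y) (fst y'), \<lambda>n. st (snd y n) * snd y' n)"

text \<open>Left action of B on Y:
  phi_B(a,f)(xi,g) = (phi(a) xi, (a g_1, f_1 g_2, f_2 g_3, ...)), written 0-based.\<close>

definition phiB :: "('a::times \<Rightarrow> 'x \<Rightarrow> 'x) \<Rightarrow> 'a \<times> (nat \<Rightarrow> 'a) \<Rightarrow> 'x \<times> (nat \<Rightarrow> 'a) \<Rightarrow> 'x \<times> (nat \<Rightarrow> 'a)" where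
  "phiB phi b y = (phi (fst b) (fst y),
                   \<lambda>n. if n = 0 then fst b * snd y 0 else snd b (n - 1) * snd y n)"

definition hnY :: "('a::real_normed_algebra \<Rightarrow> 'a) \<Rightarrow> ('x \<Rightarrow> 'x \<Rightarrow> 'a) \<Rightarrow> 'x \<times> (nat \<Rightarrow> 'a) \<Rightarrow> real" where
  "hnY st ip y = sqrt (normB (ipY st ip y y))"

definition ThetaY :: "('x \<Rightarrow> 'a::times \<Rightarrow> 'x) \<Rightarrow> ('a \<Rightarrow> 'a) \<Rightarrow> ('x \<Rightarrow> 'x \<Rightarrow> 'a) \<Rightarrow>
    'x \<times> (nat \<Rightarrow> 'a) \<Rightarrow> 'x \<times> (nat \<Rightarrow> 'a) \<Rightarrow> 'x \<times> (nat \<Rightarrow> 'a) \<Rightarrow> 'x \<times> (nat \<Rightarrow> 'a)" where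
  "ThetaY ract st ip y y' z = ractY ract y (ipY st ip y' z)"

text \<open>K(Y): operators on Y that are operator-norm limits of finite sums of Theta's.
  The sum Theta_{ys 0, ys' 0} + ... + Theta_{ys (n-1), ys' (n-1)} is within e of T in
  operator norm iff the stated inequality holds on Y.\<close>

definition finrank_approx ::
  "('a::{real_normed_algebra,banach} \<Rightarrow> 'x::ab_group_add \<Rightarrow> 'x) \<Rightarrow> ('x \<Rightarrow> 'a \<Rightarrow> 'x) \<Rightarrow> ('a \<Rightarrow> 'a) \<Rightarrow>
   ('x \<Rightarrow> 'x \<Rightarrow> 'a) \<Rightarrow> ('x \<times> (nat \<Rightarrow> 'a) \<Rightarrow> 'x \<times> (nat \<Rightarrow> 'a)) \<Rightarrow> real \<Rightarrow>
   nat \<Rightarrow> (nat \<Rightarrow> 'x \<times> (nat \<Rightarrow> 'a)) \<Rightarrow> (nat \<Rightarrow> 'x \<times> (nat \<Rightarrow> 'a)) \<Rightarrow> bool" where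
  "finrank_approx phi ract st ip T e n ys ys' \<longleftrightarrow>
     (\<forall>i<n. ys i \<in> Ycar phi \<and> ys' i \<in> Ycar phi) \<and>
     (\<forall>z\<in>Ycar phi. hnY st ip (subY (T z) (sumY n (\<lambda>i. ThetaY ract st ip (ys i) (ys' i) z)))
                     \<le> e * hnY st ip z)"

definition inKY ::
  "('a::{real_normed_algebra,banach} \<Rightarrow> 'x::ab_group_add \<Rightarrow> 'x) \<Rightarrow> ('x \<Rightarrow> 'a \<Rightarrow> 'x) \<Rightarrow> ('a \<Rightarrow> 'a) \<Rightarrow>
   ('x \<Rightarrow> 'x \<Rightarrow> 'a) \<Rightarrow> ('x \<times> (nat \<Rightarrow> 'a) \<Rightarrow> 'x \<times> (nat \<Rightarrow> 'a)) \<Rightarrow> bool" where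
  "inKY phi ract st ip T \<longleftrightarrow> (\<forall>e>0. \<exists>n ys ys'. finrank_approx phi ract st ip T e n ys ys')"

definition JY ::
  "('a::{real_normed_algebra,banach} \<Rightarrow> 'x::ab_group_add \<Rightarrow> 'x) \<Rightarrow> ('x \<Rightarrow> 'a \<Rightarrow> 'x) \<Rightarrow> ('a \<Rightarrow> 'a) \<Rightarrow>
   ('x \<Rightarrow> 'x \<Rightarrow> 'a) \<Rightarrow> ('a \<times> (nat \<Rightarrow> 'a)) set" where
  "JY phi ract st ip = {b \<in> Bcar phi. inKY phi ract st ip (phiB phi b)}"

text \<open>pi1_is T c: the (continuous extension to K(Y) of the) map
  rho^(1)(Theta_{y,y'}) = t(y) t(y')^* takes the value c at T, i.e. T and c are
  simultaneously limits of finite sums of Theta_{y,y'} resp. t(y) t(y')^*.\<close>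

definition pi1_is ::
  "('a::{real_normed_algebra,banach} \<Rightarrow> 'x::ab_group_add \<Rightarrow> 'x) \<Rightarrow> ('x \<Rightarrow> 'a \<Rightarrow> 'x) \<Rightarrow> ('a \<Rightarrow> 'a) \<Rightarrow>
   ('x \<Rightarrow> 'x \<Rightarrow> 'a) \<Rightarrow> ('c::real_normed_algebra \<Rightarrow> 'c) \<Rightarrow> ('x \<times> (nat \<Rightarrow> 'a) \<Rightarrow> 'c) \<Rightarrow>
   ('x \<times> (nat \<Rightarrow> 'a) \<Rightarrow> 'x \<times> (nat \<Rightarrow> 'a)) \<Rightarrow> 'c \<Rightarrow> bool" where
  "pi1_is phi ract st ip stC t T c \<longleftrightarrow>
     (\<forall>e>0. \<exists>n ys ys'. finrank_approx phi ract st ip T e n ys ys' \<and>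
        norm (c - (\<Sum>i<n. t (ys i) * stC (t (ys' i)))) \<le> e)"

definition representationY ::
  "(complex \<Rightarrow> 'a::{real_normed_algebra,banach} \<Rightarrow> 'a) \<Rightarrow> ('a \<Rightarrow> 'a) \<Rightarrow>
   (complex \<Rightarrow> 'x::ab_group_add \<Rightarrow> 'x) \<Rightarrow> ('x \<Rightarrow> 'a \<Rightarrow> 'x) \<Rightarrow> ('x \<Rightarrow> 'x \<Rightarrow> 'a) \<Rightarrow>
   ('a \<Rightarrow> 'x \<Rightarrow> 'x) \<Rightarrow>
   (complex \<Rightarrow> 'c::{real_normed_algebra,banach} \<Rightarrow> 'c) \<Rightarrow> ('c \<Rightarrow> 'c) \<Rightarrow>
   ('a \<times> (nat \<Rightarrow> 'a) \<Rightarrow> 'c) \<Rightarrow> ('x \<times> (nat \<Rightarrow> 'a) \<Rightarrow> 'c) \<Rightarrow> bool" where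
  "representationY sc st scX ract ip phi scC stC rho t \<longleftrightarrow>
     (\<forall>b\<in>Bcar phi. \<forall>b'\<in>Bcar phi. rho (addB b b') = rho b + rho b' \<and> rho (mulB b b') = rho b * rho b') \<and>
     (\<forall>c. \<forall>b\<in>Bcar phi. rho (scB sc c b) = scC c (rho b)) \<and>
     (\<forall>b\<in>Bcar phi. rho (stB st b) = stC (rho b)) \<and>
     (\<forall>y\<in>Ycar phi. \<forall>y'\<in>Ycar phi. t (addY y y') = t y + t y') \<and>
     (\<forall>c. \<forall>y\<in>Ycar phi. t (scY sc scX c y) = scC c (t y)) \<and>
     (\<forall>y\<in>Ycar phi. \<forall>y'\<in>Ycar phi. stC (t y) * t y' = rho (ipY st ip y y')) \<and>
     (\<forall>b\<in>Bcar phi. \<forall>y\<in>Ycar phi. t (phiB phi b y) = rho b * t y) \<and>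
     (\<forall>b\<in>Bcar phi. \<forall>y\<in>Ycar phi. t (ractY ract y b) = t y * rho b)"

definition coisometric_on_JY ::
  "(complex \<Rightarrow> 'a::{real_normed_algebra,banach} \<Rightarrow> 'a) \<Rightarrow> ('a \<Rightarrow> 'a) \<Rightarrow>
   ('x::ab_group_add \<Rightarrow> 'a \<Rightarrow> 'x) \<Rightarrow> ('x \<Rightarrow> 'x \<Rightarrow> 'a) \<Rightarrow> ('a \<Rightarrow> 'x \<Rightarrow> 'x) \<Rightarrow>
   ('c::{real_normed_algebra,banach} \<Rightarrow> 'c) \<Rightarrow>
   ('a \<times> (nat \<Rightarrow> 'a) \<Rightarrow> 'c) \<Rightarrow> ('x \<times> (nat \<Rightarrow> 'a) \<Rightarrow> 'c) \<Rightarrow> bool" where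
  "coisometric_on_JY sc st ract ip phi stC rho t \<longleftrightarrow>
     (\<forall>b\<in>JY phi ract st ip. pi1_is phi ract st ip stC t (phiB phi b) (rho b))"

definition cstar_generated ::
  "(complex \<Rightarrow> 'c::{real_normed_algebra,banach} \<Rightarrow> 'c) \<Rightarrow> ('c \<Rightarrow> 'c) \<Rightarrow> 'c set \<Rightarrow> 'c set" where
  "cstar_generated scC stC S =
     \<Inter>{D. S \<subseteq> D \<and> closed D \<and> 0 \<in> D \<and>
          (\<forall>x\<in>D. \<forall>y\<in>D. x + y \<in> D \<and> x * y \<in> D) \<and>
          (\<forall>c. \<forall>x\<in>D. scC c x \<in> D) \<and> (\<forall>x\<in>D. stC x \<in> D)}"

text \<open>lprod n u x = u 0 * u 1 * ... * u (n-1) * x;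
      rprod n v x = x * v (n-1) * ... * v 1 * v 0.\<close>

fun lprod :: "nat \<Rightarrow> (nat \<Rightarrow> 'c::times) \<Rightarrow> 'c \<Rightarrow> 'c" where
  "lprod 0 u x = x"
| "lprod (Suc n) u x = lprod n u (u n * x)"

fun rprod :: "nat \<Rightarrow> (nat \<Rightarrow> 'c::times) \<Rightarrow> 'c \<Rightarrow> 'c" where
  "rprod 0 v x = x"
| "rprod (Suc n) v x = rprod n v (x * v n)"

end

theory Submission
  imports Defs
begin

text \<open>Write \<open>t(\<xi>,f) = t(\<xi>,0) + t(0,f)\<close> and \<open>\<rho>(a,h) = \<rho>(a,0) + \<rho>(0,h)\<close>. Since
\<open>\<langle>(0,f),(\<xi>,0)\<rangle> = 0\<close> and \<open>(0,f)\<cdot>(a,0) = 0\<close>, the operators \<open>t(0,f)\<close> annihilate \<open>C\<^sub>X\<close> from the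
left and the \<open>t(0,g)\<^sup>*\<close> from the right. Because \<open>f\<^sub>0 \<in> ker \<phi>\<close>, the rank-one operator
\<open>\<Theta>\<^bsub>(0,f),(0,g)\<^esub>\<close> is \<open>\<phi>\<^sub>B(b)\<close> for \<open>b = (f\<^sub>0 g\<^sub>0\<^sup>*, (f\<^sub>i\<^sub>+\<^sub>1 g\<^sub>i\<^sub>+\<^sub>1\<^sup>*)\<^sub>i)\<close>, so \<open>b \<in> J(Y)\<close> and
coisometry gives \<open>t(0,f) t(0,g)\<^sup>* = \<rho>(b)\<close>. Expanding \<open>t(\<xi>,f) (c + \<rho>(0,k)) t(\<eta>,g)\<^sup>*\<close> into
eight terms therefore again yields an element of \<open>C\<^sub>X\<close> plus some \<open>\<rho>(0,k')\<close>, and induction on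
\<open>n\<close> finishes the proof.\<close>

lemma cstar_generated_minimal:
  assumes "S \<subseteq> D" "closed D" "0 \<in> D"
    and "\<And>x y. x \<in> D \<Longrightarrow> y \<in> D \<Longrightarrow> x + y \<in> D" "\<And>x y. x \<in> D \<Longrightarrow> y \<in> D \<Longrightarrow> x * y \<in> D"
    and "\<And>c x. x \<in> D \<Longrightarrow> sc c x \<in> D" "\<And>x. x \<in> D \<Longrightarrow> st x \<in> D"
  shows "cstar_generated sc st S \<subseteq> D"
  unfolding cstar_generated_def by (rule Inter_lower) (simp add: assms)

lemma cstar_generated_base: "x \<in> S \<Longrightarrow> x \<in> cstar_generated sc st S"
  unfolding cstar_generated_def by blast

lemma cstar_generated_add:
  "x \<in> cstar_generated sc st S \<Longrightarrow> y \<in> cstar_generated sc st S \<Longrightarrow> x + y \<in> cstar_generated sc st S"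
  unfolding cstar_generated_def by blast

lemma cstar_generated_mult:
  "x \<in> cstar_generated sc st S \<Longrightarrow> y \<in> cstar_generated sc st S \<Longrightarrow> x * y \<in> cstar_generated sc st S"
  unfolding cstar_generated_def by blast

lemma cstar_generated_star: "x \<in> cstar_generated sc st S \<Longrightarrow> st x \<in> cstar_generated sc st S"
  unfolding cstar_generated_def by blast

lemma rprod_lprod_Suc:
  fixes u v :: "nat \<Rightarrow> 'a::semigroup_mult"
  shows "rprod (Suc n) v (lprod (Suc n) u x) = rprod n v (lprod n u (u n * x * v n))"
proof -
  have "lprod m u y * w = lprod m u (y * w)" for m y w
    by (induction m arbitrary: y) (simp_all add: mult.assoc)
  then show ?thesis by simp
qed

lemma rprod_lprod_closed:
  fixes u v :: "nat \<Rightarrow> 'a::semigroup_mult"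
  assumes "x \<in> S" and "\<And>i y. i < n \<Longrightarrow> y \<in> S \<Longrightarrow> u i * y * v i \<in> S"
  shows "rprod n v (lprod n u x) \<in> S"
  using assms by (induction n arbitrary: x) (simp_all only: rprod_lprod_Suc, auto)

locale cstar =
  fixes sc :: "complex \<Rightarrow> 'a::{real_normed_algebra,banach} \<Rightarrow> 'a"
    and st :: "'a \<Rightarrow> 'a"
  assumes cstar_algebra: "cstar_algebra sc st"
begin

lemma star_add: "st (x + y) = st x + st y"
  using cstar_algebra unfolding cstar_algebra_def by blast

lemma star_mult: "st (x * y) = st y * st x"
  using cstar_algebra unfolding cstar_algebra_def by blast

lemma star_star [simp]: "st (st x) = x"
  using cstar_algebra unfolding cstar_algebra_def by blast

lemma norm_star_mult_self: "norm (st x * x) = (norm x)\<^sup>2"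
  using cstar_algebra unfolding cstar_algebra_def by blast

lemma sc_mult_left: "sc c (x * y) = sc c x * y"
  using cstar_algebra unfolding cstar_algebra_def by blast

lemma sc_mult_right: "sc c (x * y) = x * sc c y"
  using cstar_algebra unfolding cstar_algebra_def by blast

lemma sc_add: "sc c (x + y) = sc c x + sc c y"
  using cstar_algebra unfolding cstar_algebra_def by blast

lemma sc_zero [simp]: "sc c 0 = 0"
  using sc_add[of c 0 0] by simp

lemma star_zero [simp]: "st 0 = 0"
  using star_add[of 0 0] by simp

lemma star_diff: "st (x - y) = st x - st y"
  using star_add[of "x - y" y] by (simp add: eq_diff_eq)

lemma norm_star [simp]: "norm (st x) = norm x"
proof -
  have le: "norm y \<le> norm (st y)" for y
  proof -
    have "(norm y)\<^sup>2 \<le> norm (st y) * norm y"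
      using norm_star_mult_self[of y] norm_mult_ineq[of "st y" y] by simp
    then show ?thesis
      by (cases "norm y = 0") (simp_all add: power2_eq_square)
  qed
  show ?thesis using le[of x] le[of "st x"] by simp
qed

lemma star_mult_self_eq_0: "st x * x = 0 \<Longrightarrow> x = 0"
  using norm_star_mult_self[of x] by simp

definition star_annihilator :: "'a set \<Rightarrow> 'a set" where
  "star_annihilator V = {c. \<forall>v\<in>V. v * c = 0 \<and> c * st v = 0}"

lemma closed_star_annihilator: "closed (star_annihilator V)"
proof -
  have "star_annihilator V = (\<Inter>v\<in>V. {c. v * c = 0} \<inter> {c. c * st v = 0})"
    unfolding star_annihilator_def by blast
  moreover have "closed ({c. v * c = 0} \<inter> {c. c * st v = 0})" for v
    by (intro closed_Int closed_Collect_eq continuous_intros)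
  ultimately show ?thesis by (simp add: closed_INT)
qed

lemma cstar_generated_subset_star_annihilator:
  assumes "S \<subseteq> star_annihilator V"
  shows "cstar_generated sc st S \<subseteq> star_annihilator V"
proof (rule cstar_generated_minimal[OF assms closed_star_annihilator])
  fix x y c assume x: "x \<in> star_annihilator V" and y: "y \<in> star_annihilator V"
  then show "x + y \<in> star_annihilator V"
    unfolding star_annihilator_def by (simp add: distrib_left distrib_right)
  have "v * (x * y) = (v * x) * y" "(x * y) * w = x * (y * w)" for v w
    by (simp_all add: mult.assoc)
  then show "x * y \<in> star_annihilator V"
    using x y unfolding star_annihilator_def by simp
  show "sc c x \<in> star_annihilator V"
    using x unfolding star_annihilator_def by (simp add: sc_mult_left[symmetric] sc_mult_right[symmetric])
  have "v * st x = st (x * st v)" "st x * st v = st (v * x)" for v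
    by (simp_all add: star_mult)
  then show "st x \<in> star_annihilator V"
    using x unfolding star_annihilator_def by simp
qed (simp add: star_annihilator_def)

end

locale correspondence =
  fixes sc :: "complex \<Rightarrow> 'a::{real_normed_algebra,banach} \<Rightarrow> 'a"
    and st :: "'a \<Rightarrow> 'a"
    and scX :: "complex \<Rightarrow> 'x::ab_group_add \<Rightarrow> 'x"
    and ract :: "'x \<Rightarrow> 'a \<Rightarrow> 'x"
    and ip :: "'x \<Rightarrow> 'x \<Rightarrow> 'a"
    and phi :: "'a \<Rightarrow> 'x \<Rightarrow> 'x"
  assumes correspondence: "cstar_correspondence sc st scX ract ip phi"

sublocale correspondence \<subseteq> cstar sc st
  using correspondence by unfold_locales (simp add: cstar_correspondence_def)

context correspondence
begin

lemma hilbert_module: "hilbert_module sc st scX ract ip"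
  using correspondence unfolding cstar_correspondence_def by blast

lemma phi_mult: "phi (a * b) x = phi a (phi b x)"
  using correspondence unfolding cstar_correspondence_def by blast

lemma phi_adjoint: "ip (phi a x) y = ip x (phi (st a) y)"
  using correspondence unfolding cstar_correspondence_def by blast

lemma phi_add_left: "phi (a + b) x = phi a x + phi b x"
proof -
  have "\<forall>a b x. phi (a + b) x = phi a x + phi b x"
    using correspondence unfolding cstar_correspondence_def by (elim conjE) assumption
  then show ?thesis by blast
qed

lemma ract_add_left: "ract (x + y) a = ract x a + ract y a"
proof -
  have "\<forall>x y a. ract (x + y) a = ract x a + ract y a"
    using hilbert_module unfolding hilbert_module_def by (elim conjE) assumption
  then show ?thesis by blast
qed

lemma ract_add_right: "ract x (a + b) = ract x a + ract x b"
proof -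
  have "\<forall>x a b. ract x (a + b) = ract x a + ract x b"
    using hilbert_module unfolding hilbert_module_def by (elim conjE) assumption
  then show ?thesis by blast
qed

lemma ip_add_right: "ip x (y + z) = ip x y + ip x z"
proof -
  have "\<forall>x y z. ip x (y + z) = ip x y + ip x z"
    using hilbert_module unfolding hilbert_module_def by (elim conjE) assumption
  then show ?thesis by blast
qed

lemma ip_self_eq_0: "ip x x = 0 \<Longrightarrow> x = 0"
proof -
  have "\<forall>x. ip x x = 0 \<longrightarrow> x = 0"
    using hilbert_module unfolding hilbert_module_def by (elim conjE) assumption
  then show "ip x x = 0 \<Longrightarrow> x = 0" by blast
qed

lemma phi_zero_left [simp]: "phi 0 x = 0"
  using phi_add_left[of 0 0 x] by simp

lemma ract_zero_left [simp]: "ract 0 a = 0"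
  using ract_add_left[of 0 0 a] by simp

lemma ract_zero_right [simp]: "ract x 0 = 0"
  using ract_add_right[of x 0 0] by simp

lemma ip_zero_right [simp]: "ip x 0 = 0"
  using ip_add_right[of x 0 0] by simp

lemma kerphi_mult_right: "p \<in> kerphi phi \<Longrightarrow> p * y \<in> kerphi phi"
  unfolding kerphi_def by (simp add: phi_mult)

lemma kerphi_star:
  assumes "p \<in> kerphi phi"
  shows "st p \<in> kerphi phi"
  unfolding kerphi_def
proof (intro CollectI allI)
  fix x
  have "ip (phi (st p) x) (phi (st p) x) = ip x (phi p (phi (st p) x))"
    using phi_adjoint[of "st p" x] by simp
  also have "\<dots> = 0" using assms unfolding kerphi_def by simp
  finally show "phi (st p) x = 0" by (rule ip_self_eq_0)
qed

lemma zero_in_tail [simp]: "(\<lambda>_. 0) \<in> tail phi"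
  unfolding tail_def kerphi_def by simp

lemma tail_mult:
  assumes "p \<in> tail phi" and "q \<in> tail phi"
  shows "(\<lambda>n. p n * q n) \<in> tail phi"
proof -
  have "(\<lambda>n. p n * q n) \<longlonglongrightarrow> 0 * 0"
    using assms unfolding tail_def by (intro tendsto_mult) auto
  then show ?thesis using assms unfolding tail_def by (simp add: kerphi_mult_right)
qed

lemma tail_star:
  assumes "p \<in> tail phi"
  shows "(\<lambda>n. st (p n)) \<in> tail phi"
proof -
  have "(\<lambda>n. norm (st (p n))) \<longlonglongrightarrow> 0"
    using assms unfolding tail_def by (simp add: tendsto_norm_zero_iff)
  then have "(\<lambda>n. st (p n)) \<longlonglongrightarrow> 0"
    by (rule tendsto_norm_zero_cancel)
  then show ?thesis using assms unfolding tail_def by (simp add: kerphi_star)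
qed

lemma tail_shift: "p \<in> tail phi \<Longrightarrow> (\<lambda>n. p (Suc n)) \<in> tail phi"
  unfolding tail_def by (auto simp: LIMSEQ_Suc)

lemma Bcar_iff [simp]: "(a, k) \<in> Bcar phi \<longleftrightarrow> k \<in> tail phi"
  unfolding Bcar_def by simp

lemma Ycar_iff [simp]: "(x, k) \<in> Ycar phi \<longleftrightarrow> k \<in> tail phi"
  unfolding Ycar_def by simp

lemma ipY_in_Bcar: "y \<in> Ycar phi \<Longrightarrow> y' \<in> Ycar phi \<Longrightarrow> ipY st ip y y' \<in> Bcar phi"
  unfolding Ycar_def ipY_def by (auto intro: tail_mult[OF tail_star])

definition shifted_outer :: "(nat \<Rightarrow> 'a) \<Rightarrow> (nat \<Rightarrow> 'a) \<Rightarrow> 'a \<times> (nat \<Rightarrow> 'a)" where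
  "shifted_outer p q = (p 0 * st (q 0), \<lambda>n. p (Suc n) * st (q (Suc n)))"

lemma shifted_outer_in_Bcar: "p \<in> tail phi \<Longrightarrow> q \<in> tail phi \<Longrightarrow> shifted_outer p q \<in> Bcar phi"
  unfolding shifted_outer_def by (simp add: tail_mult tail_star tail_shift)

lemma stB_shifted_outer: "stB st (shifted_outer p q) = shifted_outer q p"
  unfolding shifted_outer_def stB_def by (simp add: star_mult)

lemma phiB_shifted_outer:
  assumes "p \<in> tail phi"
  shows "phiB phi (shifted_outer p q) y = ThetaY ract st ip (0, p) (0, q) y"
proof -
  have "p 0 \<in> kerphi phi" using assms unfolding tail_def by simp
  then have "phi (p 0 * st (q 0)) (fst y) = 0" unfolding kerphi_def by (simp add: phi_mult)
  then show ?thesis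
    unfolding shifted_outer_def phiB_def ThetaY_def ractY_def ipY_def by (auto simp: mult.assoc)
qed

lemma shifted_outer_in_JY:
  assumes p: "p \<in> tail phi" and q: "q \<in> tail phi"
  shows "shifted_outer p q \<in> JY phi ract st ip"
  unfolding JY_def inKY_def
proof (intro CollectI conjI shifted_outer_in_Bcar p q allI impI exI)
  fix e :: real assume "e > 0"
  have "hnY st ip (0, \<lambda>_. 0) = 0" by (simp add: hnY_def ipY_def normB_def)
  moreover have "hnY st ip z \<ge> 0" for z unfolding hnY_def normB_def by (auto simp: le_max_iff_disj)
  ultimately show "finrank_approx phi ract st ip (phiB phi (shifted_outer p q)) e 1
      (\<lambda>_. (0, p)) (\<lambda>_. (0, q))"
    unfolding finrank_approx_def using \<open>e > 0\<close> p q
    by (simp add: phiB_shifted_outer[OF p] sumY_def subY_def)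
qed

end

locale tail_representation = correspondence sc st scX ract ip phi + C: cstar scC stC
  for sc :: "complex \<Rightarrow> 'a::{real_normed_algebra,banach} \<Rightarrow> 'a"
    and st :: "'a \<Rightarrow> 'a"
    and scX :: "complex \<Rightarrow> 'x::ab_group_add \<Rightarrow> 'x"
    and ract :: "'x \<Rightarrow> 'a \<Rightarrow> 'x"
    and ip :: "'x \<Rightarrow> 'x \<Rightarrow> 'a"
    and phi :: "'a \<Rightarrow> 'x \<Rightarrow> 'x"
    and scC :: "complex \<Rightarrow> 'c::{real_normed_algebra,banach} \<Rightarrow> 'c"
    and stC :: "'c \<Rightarrow> 'c" +
  fixes rho :: "'a \<times> (nat \<Rightarrow> 'a) \<Rightarrow> 'c"
    and t :: "'x \<times> (nat \<Rightarrow> 'a) \<Rightarrow> 'c"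
  assumes representation: "representationY sc st scX ract ip phi scC stC rho t"
begin

lemma rho_add: "b \<in> Bcar phi \<Longrightarrow> b' \<in> Bcar phi \<Longrightarrow> rho (addB b b') = rho b + rho b'"
  using representation unfolding representationY_def by blast

lemma rho_stB: "b \<in> Bcar phi \<Longrightarrow> rho (stB st b) = stC (rho b)"
  using representation unfolding representationY_def by blast

lemma t_add: "y \<in> Ycar phi \<Longrightarrow> y' \<in> Ycar phi \<Longrightarrow> t (addY y y') = t y + t y'"
  using representation unfolding representationY_def by blast

lemma star_t_mult_t: "y \<in> Ycar phi \<Longrightarrow> y' \<in> Ycar phi \<Longrightarrow> stC (t y) * t y' = rho (ipY st ip y y')"
  using representation unfolding representationY_def by blast

lemma t_phiB: "b \<in> Bcar phi \<Longrightarrow> y \<in> Ycar phi \<Longrightarrow> t (phiB phi b y) = rho b * t y"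
  using representation unfolding representationY_def by blast

lemma t_ractY: "b \<in> Bcar phi \<Longrightarrow> y \<in> Ycar phi \<Longrightarrow> t (ractY ract y b) = t y * rho b"
  using representation unfolding representationY_def by blast

lemma t_zero [simp]: "t (0, \<lambda>_. 0) = 0"
  using t_add[of "(0, \<lambda>_. 0)" "(0, \<lambda>_. 0)"] by (simp add: addY_def)

lemma t_split: "k \<in> tail phi \<Longrightarrow> t (x, k) = t (x, \<lambda>_. 0) + t (0, k)"
  using t_add[of "(x, \<lambda>_. 0)" "(0, k)"] by (simp add: addY_def)

lemma rho_split: "k \<in> tail phi \<Longrightarrow> rho (a, k) = rho (a, \<lambda>_. 0) + rho (0, k)"
  using rho_add[of "(a, \<lambda>_. 0)" "(0, k)"] by (simp add: addB_def)

lemma t_tail_mult_rho: "g \<in> tail phi \<Longrightarrow> t (0, g) * rho (a, \<lambda>_. 0) = 0"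
  using t_ractY[of "(a, \<lambda>_. 0)" "(0, g)"] by (simp add: ractY_def)

lemma t_mult_rho_tail: "k \<in> tail phi \<Longrightarrow> t (x, \<lambda>_. 0) * rho (0, k) = 0"
  using t_ractY[of "(0, k)" "(x, \<lambda>_. 0)"] by (simp add: ractY_def)

lemma t_tail_mult_rho_tail:
  "p \<in> tail phi \<Longrightarrow> k \<in> tail phi \<Longrightarrow> t (0, p) * rho (0, k) = t (0, \<lambda>n. p n * k n)"
  using t_ractY[of "(0, k)" "(0, p)"] by (simp add: ractY_def)

lemma t_tail_mult_t:
  assumes g: "g \<in> tail phi"
  shows "t (0, g) * t (x, \<lambda>_. 0) = 0"
proof (rule C.star_mult_self_eq_0)
  let ?b = "ipY st ip (0, g) (0, g)"
  have "stC (t (0, g) * t (x, \<lambda>_. 0)) * (t (0, g) * t (x, \<lambda>_. 0))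
      = stC (t (x, \<lambda>_. 0)) * (stC (t (0, g)) * t (0, g) * t (x, \<lambda>_. 0))"
    by (simp add: C.star_mult mult.assoc)
  also have "stC (t (0, g)) * t (0, g) * t (x, \<lambda>_. 0) = t (phiB phi ?b (x, \<lambda>_. 0))"
    using g by (simp add: star_t_mult_t t_phiB ipY_in_Bcar)
  also have "phiB phi ?b (x, \<lambda>_. 0) = (0, \<lambda>_. 0)"
    unfolding phiB_def ipY_def by (simp add: fun_eq_iff)
  finally show "stC (t (0, g) * t (x, \<lambda>_. 0)) * (t (0, g) * t (x, \<lambda>_. 0)) = 0"
    using t_ractY[of "(0, \<lambda>_. 0)" "(0, \<lambda>_. 0)"] by (simp add: ractY_def)
qed

lemma t_mult_star_t_tail:
  assumes g: "g \<in> tail phi"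
  shows "t (x, \<lambda>_. 0) * stC (t (0, g)) = 0"
proof (rule C.star_mult_self_eq_0)
  have "stC (t (x, \<lambda>_. 0) * stC (t (0, g))) * (t (x, \<lambda>_. 0) * stC (t (0, g)))
      = t (0, g) * (stC (t (x, \<lambda>_. 0)) * t (x, \<lambda>_. 0)) * stC (t (0, g))"
    by (simp add: C.star_mult mult.assoc)
  also have "stC (t (x, \<lambda>_. 0)) * t (x, \<lambda>_. 0) = rho (ip x x, \<lambda>_. 0)"
    using star_t_mult_t[of "(x, \<lambda>_. 0)" "(x, \<lambda>_. 0)"] by (simp add: ipY_def)
  also have "t (0, g) * rho (ip x x, \<lambda>_. 0) = 0"
    using g by (rule t_tail_mult_rho)
  finally show "stC (t (x, \<lambda>_. 0) * stC (t (0, g))) * (t (x, \<lambda>_. 0) * stC (t (0, g))) = 0"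
    by simp
qed

lemma rho_mult_star_t_tail:
  assumes g: "g \<in> tail phi"
  shows "rho (a, \<lambda>_. 0) * stC (t (0, g)) = 0"
proof -
  have "rho (a, \<lambda>_. 0) = stC (rho (st a, \<lambda>_. 0))"
    using rho_stB[of "(st a, \<lambda>_. 0)"] by (simp add: stB_def)
  then have "rho (a, \<lambda>_. 0) * stC (t (0, g)) = stC (t (0, g) * rho (st a, \<lambda>_. 0))"
    by (simp add: C.star_mult)
  then show ?thesis using g by (simp add: t_tail_mult_rho)
qed

definition CX :: "'c set" where
  "CX = cstar_generated scC stC ({rho (a, \<lambda>_. 0) | a. True} \<union> {t (x, \<lambda>_. 0) | x. True})"

lemma rho_in_CX: "rho (a, \<lambda>_. 0) \<in> CX"
  unfolding CX_def by (rule cstar_generated_base) blast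

lemma t_in_CX: "t (x, \<lambda>_. 0) \<in> CX"
  unfolding CX_def by (rule cstar_generated_base) blast

lemma CX_add: "c \<in> CX \<Longrightarrow> d \<in> CX \<Longrightarrow> c + d \<in> CX"
  unfolding CX_def by (rule cstar_generated_add)

lemma CX_mult: "c \<in> CX \<Longrightarrow> d \<in> CX \<Longrightarrow> c * d \<in> CX"
  unfolding CX_def by (rule cstar_generated_mult)

lemma CX_star: "c \<in> CX \<Longrightarrow> stC c \<in> CX"
  unfolding CX_def by (rule cstar_generated_star)

lemma CX_subset_star_annihilator: "CX \<subseteq> C.star_annihilator {t (0, g) | g. g \<in> tail phi}"
  unfolding CX_def
  by (rule C.cstar_generated_subset_star_annihilator)
    (auto simp: C.star_annihilator_def t_tail_mult_rho t_tail_mult_t t_mult_star_t_tail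
      rho_mult_star_t_tail)

lemma t_tail_mult_CX: "c \<in> CX \<Longrightarrow> g \<in> tail phi \<Longrightarrow> t (0, g) * c = 0"
  using CX_subset_star_annihilator unfolding C.star_annihilator_def by blast

lemma CX_mult_star_t_tail: "c \<in> CX \<Longrightarrow> g \<in> tail phi \<Longrightarrow> c * stC (t (0, g)) = 0"
  using CX_subset_star_annihilator unfolding C.star_annihilator_def by blast

lemma t_mult_star_t_mult_t:
  assumes "y\<^sub>1 \<in> Ycar phi" "y\<^sub>2 \<in> Ycar phi" "y \<in> Ycar phi"
  shows "t y\<^sub>1 * stC (t y\<^sub>2) * t y = t (ThetaY ract st ip y\<^sub>1 y\<^sub>2 y)"
  using assms by (simp add: mult.assoc star_t_mult_t t_ractY ipY_in_Bcar ThetaY_def)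

lemma pi1_is_annihilated:
  assumes pi: "pi1_is phi ract st ip stC t T c"
    and ann: "\<And>y. y \<in> Ycar phi \<Longrightarrow> d * t y = 0"
  shows "d * c = 0"
proof -
  have "norm (d * c) \<le> e" if "e > 0" for e
  proof -
    have pos: "norm d + 1 > 0" using norm_ge_zero[of d] by linarith
    define \<epsilon> where "\<epsilon> = e / (norm d + 1)"
    have "\<epsilon> > 0" using \<open>e > 0\<close> pos unfolding \<epsilon>_def by simp
    then obtain m ys ys' where fr: "finrank_approx phi ract st ip T \<epsilon> m ys ys'"
      and close: "norm (c - (\<Sum>i<m. t (ys i) * stC (t (ys' i)))) \<le> \<epsilon>"
      using pi unfolding pi1_is_def by blast
    let ?S = "\<Sum>i<m. t (ys i) * stC (t (ys' i))"
    have "d * ?S = (\<Sum>i<m. d * t (ys i) * stC (t (ys' i)))"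
      by (simp add: sum_distrib_left mult.assoc)
    also have "\<dots> = 0"
      using fr ann unfolding finrank_approx_def by (intro sum.neutral) auto
    finally have "d * c = d * (c - ?S)" by (simp add: right_diff_distrib)
    then have "norm (d * c) \<le> norm d * \<epsilon>"
      using close norm_mult_ineq[of d "c - ?S"] by (metis mult_left_mono norm_ge_zero order_trans)
    also have "\<dots> \<le> (norm d + 1) * \<epsilon>" using \<open>\<epsilon> > 0\<close> by simp
    also have "\<dots> = e" using pos unfolding \<epsilon>_def by simp
    finally show ?thesis .
  qed
  then have "norm (d * c) \<le> 0" using field_le_epsilon[of "norm (d * c)" 0] by simp
  then show ?thesis by simp
qed

lemma t_tail_outer_minus_rho_annihilates:
  assumes p: "p \<in> tail phi" and q: "q \<in> tail phi" and y: "y \<in> Ycar phi"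
  shows "(t (0, p) * stC (t (0, q)) - rho (shifted_outer p q)) * t y = 0"
  using p q y
  by (simp add: left_diff_distrib t_mult_star_t_mult_t phiB_shifted_outer[OF p, symmetric]
      t_phiB shifted_outer_in_Bcar)

definition CX_plus_tail :: "'c set" where
  "CX_plus_tail = {c + rho (0, k) | c k. c \<in> CX \<and> k \<in> tail phi}"

lemma rho_in_CX_plus_tail: "h \<in> tail phi \<Longrightarrow> rho (a, h) \<in> CX_plus_tail"
  unfolding CX_plus_tail_def using rho_split rho_in_CX by blast

end

locale coisometric_tail_representation = tail_representation +
  assumes coisometric: "coisometric_on_JY sc st ract ip phi stC rho t"
begin

lemma t_tail_mult_star_t_tail:
  assumes p: "p \<in> tail phi" and q: "q \<in> tail phi"
  shows "t (0, p) * stC (t (0, q)) = rho (shifted_outer p q)"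
proof -
  txt \<open>\<open>D\<^sup>*\<close> kills every \<open>t(y)\<close>, hence, by coisometry, also \<open>\<rho>(b)\<close>; so \<open>D\<^sup>* D = 0\<close>.\<close>
  define D where "D = t (0, p) * stC (t (0, q)) - rho (shifted_outer p q)"
  define D' where "D' = t (0, q) * stC (t (0, p)) - rho (shifted_outer q p)"
  have "stC (rho (shifted_outer p q)) = rho (shifted_outer q p)"
    using rho_stB[OF shifted_outer_in_Bcar[OF p q]] by (simp add: stB_shifted_outer)
  then have "stC D = D'"
    unfolding D_def D'_def by (simp add: C.star_diff C.star_mult)
  have D'_ann: "D' * t y = 0" if "y \<in> Ycar phi" for y
    unfolding D'_def using q p that by (rule t_tail_outer_minus_rho_annihilates)
  have "pi1_is phi ract st ip stC t (phiB phi (shifted_outer p q)) (rho (shifted_outer p q))"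
    using coisometric shifted_outer_in_JY[OF p q] unfolding coisometric_on_JY_def by blast
  then have "D' * rho (shifted_outer p q) = 0"
    using D'_ann by (rule pi1_is_annihilated)
  moreover have "D' * (t (0, p) * stC (t (0, q))) = 0"
    using D'_ann[of "(0, p)"] p by (simp add: mult.assoc[symmetric])
  ultimately have "stC D * D = 0"
    unfolding \<open>stC D = D'\<close> by (simp add: D_def right_diff_distrib)
  then have "D = 0" by (rule C.star_mult_self_eq_0)
  then show ?thesis unfolding D_def by simp
qed

lemma CX_plus_tail_sandwich:
  assumes z: "z \<in> CX_plus_tail" and f: "f \<in> tail phi" and g: "g \<in> tail phi"
  shows "t (x, f) * z * stC (t (y, g)) \<in> CX_plus_tail"
proof -
  obtain c k where c: "c \<in> CX" and k: "k \<in> tail phi" and z: "z = c + rho (0, k)"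
    using z unfolding CX_plus_tail_def by blast
  define fk where "fk = (\<lambda>n. f n * k n)"
  have fk: "fk \<in> tail phi" unfolding fk_def using f k by (rule tail_mult)
  define A F E G R where "A = t (x, \<lambda>_. 0)" and "F = t (0, f)" and "E = stC (t (y, \<lambda>_. 0))"
    and "G = stC (t (0, g))" and "R = rho (0, k)"
  have E: "E \<in> CX" unfolding E_def by (intro CX_star t_in_CX)
  have cG: "c * G = 0" unfolding G_def using c g by (rule CX_mult_star_t_tail)
  have Fc: "F * c = 0" unfolding F_def using c f by (rule t_tail_mult_CX)
  have AR: "A * R = 0" unfolding A_def R_def using k by (rule t_mult_rho_tail)
  have FR: "F * R = t (0, fk)" unfolding F_def R_def fk_def using f k by (rule t_tail_mult_rho_tail)
  have FRE: "t (0, fk) * E = 0" using E fk by (rule t_tail_mult_CX)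
  have FRG: "t (0, fk) * G = rho (shifted_outer fk g)"
    unfolding G_def using fk g by (rule t_tail_mult_star_t_tail)
  have "t (x, f) * z * stC (t (y, g)) = (A + F) * (c + R) * (E + G)"
    unfolding A_def F_def E_def G_def R_def z t_split[OF f, of x] t_split[OF g, of y] C.star_add ..
  also have "\<dots> = A * c * E + A * (c * G) + (A * R) * E + (A * R) * G + (F * c) * E
      + (F * c) * G + (F * R) * E + (F * R) * G"
    by (simp add: algebra_simps)
  also have "\<dots> = A * c * E + rho (shifted_outer fk g)"
    unfolding cG Fc AR FR FRE FRG by simp
  also have "rho (shifted_outer fk g) = rho (fk 0 * st (g 0), \<lambda>_. 0)
      + rho (0, \<lambda>n. fk (Suc n) * st (g (Suc n)))"
    unfolding shifted_outer_def using tail_mult[OF tail_shift[OF fk] tail_star[OF tail_shift[OF g]]]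
    by (rule rho_split)
  finally have "t (x, f) * z * stC (t (y, g))
      = (A * c * E + rho (fk 0 * st (g 0), \<lambda>_. 0)) + rho (0, \<lambda>n. fk (Suc n) * st (g (Suc n)))"
    by (simp only: add.assoc)
  moreover have "A * c * E + rho (fk 0 * st (g 0), \<lambda>_. 0) \<in> CX"
    unfolding A_def using c E by (intro CX_add CX_mult t_in_CX rho_in_CX)
  moreover have "(\<lambda>n. fk (Suc n) * st (g (Suc n))) \<in> tail phi"
    using tail_mult[OF tail_shift[OF fk] tail_star[OF tail_shift[OF g]]] by simp
  ultimately show ?thesis unfolding CX_plus_tail_def by blast
qed

end

theorem mainTheorem9:
  fixes sc :: "complex \<Rightarrow> 'a::{real_normed_algebra,banach} \<Rightarrow> 'a"
    and st :: "'a \<Rightarrow> 'a"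
    and scX :: "complex \<Rightarrow> 'x::ab_group_add \<Rightarrow> 'x"
    and ract :: "'x \<Rightarrow> 'a \<Rightarrow> 'x"
    and ip :: "'x \<Rightarrow> 'x \<Rightarrow> 'a"
    and phi :: "'a \<Rightarrow> 'x \<Rightarrow> 'x"
    and scC :: "complex \<Rightarrow> 'c::{real_normed_algebra,banach} \<Rightarrow> 'c"
    and stC :: "'c \<Rightarrow> 'c"
    and rho :: "'a \<times> (nat \<Rightarrow> 'a) \<Rightarrow> 'c"
    and t :: "'x \<times> (nat \<Rightarrow> 'a) \<Rightarrow> 'c"
    and n :: nat
    and xi eta :: "nat \<Rightarrow> 'x"
    and f g :: "nat \<Rightarrow> nat \<Rightarrow> 'a"
    and h :: "nat \<Rightarrow> 'a"
    and a :: 'a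
  assumes corr: "cstar_correspondence sc st scX ract ip phi"
    and C: "cstar_algebra scC stC"
    and rep: "representationY sc st scX ract ip phi scC stC rho t"
    and cois: "coisometric_on_JY sc st ract ip phi stC rho t"
    and f_tail: "\<forall>i<n. f i \<in> tail phi"
    and g_tail: "\<forall>i<n. g i \<in> tail phi"
    and h_tail: "h \<in> tail phi"
  shows "\<exists>c \<in> cstar_generated scC stC
                 ({rho (a', \<lambda>_. 0) | a'. True} \<union> {t (x, \<lambda>_. 0) | x. True}).
         \<exists>k \<in> tail phi.
           rprod n (\<lambda>i. stC (t (eta i, g i))) (lprod n (\<lambda>i. t (xi i, f i)) (rho (a, h)))
             = c + rho (0, k)"
proof -
  interpret coisometric_tail_representation sc st scX ract ip phi scC stC rho t
    using corr C rep cois by unfold_locales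
  have "rprod n (\<lambda>i. stC (t (eta i, g i))) (lprod n (\<lambda>i. t (xi i, f i)) (rho (a, h)))
      \<in> CX_plus_tail"
    using rho_in_CX_plus_tail[OF h_tail] f_tail g_tail
    by (intro rprod_lprod_closed) (auto intro: CX_plus_tail_sandwich)
  then show ?thesis unfolding CX_plus_tail_def CX_def by blast
qed

end
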